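(* Let $n\ge1$, let $X_1,\ldots,X_n$ be random variables with joint law $\mathcal{P}_{X^n}$ and product of marginals $\mathcal{P}_{\otimes_{i=1}^n X_i}$, with $\mathcal{P}_{X^n}\ll\mathcal{P}_{\otimes_{i=1}^n X_i}$, and let $f$ satisfy $|f(x_1,\ldots,x_i,\ldots,x_n)-f(x_1,\ldots,\hat x,\ldots,x_n)|\le 1/n$ for all $x^n,\hat x$ and $1\le i\le n$. Let $\alpha>1$, $\beta=\alpha/(\alpha-1)$, and $t_\alpha=\sqrt{\frac{\beta\ln H_\alpha(\mathcal{P}_{X^n}\|\mathcal{P}_{\otimes_{i=1}^n X_i})}{2\alpha n}}$. Then $$\left|\mathcal{P}_{X^n}(f)-\mathcal{P}_{\otimes_{i=1}^n X_i}(f)\right|\le t_\alpha+\frac{\sqrt\beta}{2^{1/\alpha}\sqrt{\frac{2n}{\alpha}\ln H_\alpha(\mathcal{P}_{X^n}\|\mathcal{P}_{\otimes_{i=1}^n X_i})}}.$$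
   Context: $\mu(g)=\int g\,d\mu$; for $\nu\ll\mu$, $H_\alpha(\nu\|\mu)=\int(d\nu/d\mu)^\alpha d\mu$. *)

theory Defs
  imports "HOL-Probability.Probability"
begin

definition renyi_H :: "real \<Rightarrow> 'a measure \<Rightarrow> 'a measure \<Rightarrow> ennreal" where
  "renyi_H \<alpha> \<nu> \<mu> = (\<integral>\<^sup>+ x. ennreal (enn2real (RN_deriv \<mu> \<nu> x) powr \<alpha>) \<partial>\<mu>)"

end

(*
  Q is the product of the marginals, so McDiarmid's argument applies under Q: conditioning on
  one coordinate at a time and applying Hoeffding's lemma to each section gives
  Q(exp (l (f - Q f))) <= exp (l^2 / (8 n)).  To move to P, write P(exp (l (f - Q f))) as
  Q(dP/dQ * exp (l (f - Q f))) and apply Hoelder with exponents alpha and beta; together with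
  Jensen this gives  l (P f - Q f) <= ln H / alpha + beta l^2 / (8 n)  for all l > 0, and
  optimising over l yields |P f - Q f| <= t_alpha.
*)

theory Submission
  imports Defs
begin

section \<open>Bounded differences and McDiarmid's exponential moment bound\<close>

definition bounded_differences ::
    "'i set \<Rightarrow> ('i \<Rightarrow> 'a measure) \<Rightarrow> (('i \<Rightarrow> 'a) \<Rightarrow> real) \<Rightarrow> real \<Rightarrow> bool" where
  "bounded_differences I N f c \<longleftrightarrow>
     (\<forall>x\<in>space (PiM I N). \<forall>i\<in>I. \<forall>y\<in>space (N i). \<bar>f x - f (x(i := y))\<bar> \<le> c)"

lemma bounded_differencesD:
  "bounded_differences I N f c \<Longrightarrow> x \<in> space (PiM I N) \<Longrightarrow> i \<in> I \<Longrightarrow> y \<in> space (N i) \<Longrightarrow>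
    \<bar>f x - f (x(i := y))\<bar> \<le> c"
  by (simp add: bounded_differences_def)

lemma bounded_differences_uminus [simp]:
  "bounded_differences I N (\<lambda>x. - f x) c \<longleftrightarrow> bounded_differences I N f c"
  by (simp add: bounded_differences_def abs_minus_commute)

lemma bounded_differences_diff_le:
  assumes fin: "finite I" and bdd: "bounded_differences I N f c"
    and x: "x \<in> space (PiM I N)" and y: "y \<in> space (PiM I N)"
  shows "\<bar>f x - f y\<bar> \<le> c * card I"
proof -
  define mix where "mix S = (\<lambda>j. if j \<in> S then y j else x j)" for S
  have mix_space: "mix S \<in> space (PiM I N)" for S
    using x y by (auto simp: mix_def space_PiM PiE_def extensional_def Pi_def)
  have "\<bar>f x - f (mix S)\<bar> \<le> c * card S" if "S \<subseteq> I" for S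
    using finite_subset[OF that fin] that
  proof (induction S rule: finite_induct)
    case (insert k S)
    have "mix (insert k S) = (mix S)(k := y k)"
      by (auto simp: mix_def)
    then have "\<bar>f (mix S) - f (mix (insert k S))\<bar> \<le> c"
      using bounded_differencesD[OF bdd mix_space, of k "y k"] insert.prems y
      by (auto simp: space_PiM PiE_def)
    with insert show ?case
      by (simp add: algebra_simps)
  qed (simp add: mix_def)
  moreover have "mix I = y"
    using x y by (auto simp: mix_def space_PiM PiE_def extensional_def)
  ultimately show ?thesis
    by force
qed

lemma bounded_differences_bounded:
  assumes "finite I" "\<And>i. i \<in> I \<Longrightarrow> prob_space (N i)" "bounded_differences I N f c"
  obtains B where "\<And>x. x \<in> space (PiM I N) \<Longrightarrow> \<bar>f x\<bar> \<le> B"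
proof -
  interpret prob_space "PiM I N"
    using assms(2) by (rule prob_space_PiM)
  obtain x0 where x0: "x0 \<in> space (PiM I N)"
    using not_empty by blast
  have "\<bar>f x\<bar> \<le> \<bar>f x0\<bar> + c * card I" if "x \<in> space (PiM I N)" for x
    using bounded_differences_diff_le[OF assms(1,3) that x0] by linarith
  then show ?thesis
    using that by blast
qed

lemma bounded_differences_integrable:
  assumes "finite I" "\<And>i. i \<in> I \<Longrightarrow> prob_space (N i)"
    and "f \<in> borel_measurable (PiM I N)" "bounded_differences I N f c"
  shows "integrable (PiM I N) f"
proof -
  interpret prob_space "PiM I N"
    using assms(2) by (rule prob_space_PiM)
  obtain B where "\<And>x. x \<in> space (PiM I N) \<Longrightarrow> \<bar>f x\<bar> \<le> B"
    using bounded_differences_bounded[OF assms(1,2,4)] by blast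
  with assms(3) show ?thesis
    by (intro integrable_const_bound[where B = B]) auto
qed

lemma (in prob_space) Hoeffdings_lemma_oscillation:
  assumes [measurable]: "f \<in> borel_measurable M"
    and osc: "\<And>x y. x \<in> space M \<Longrightarrow> y \<in> space M \<Longrightarrow> f x - f y \<le> c" and "l > 0"
  shows "(\<integral>\<^sup>+x. ennreal (exp (l * (f x - expectation f))) \<partial>M) \<le> ennreal (exp (l\<^sup>2 * c\<^sup>2 / 8))"
proof -
  obtain x0 where x0: "x0 \<in> space M"
    using not_empty by blast
  define m where "m = (INF x\<in>space M. f x)"
  have "bdd_below (f ` space M)"
    using osc[OF x0] by (intro bdd_belowI2[where m = "f x0 - c"]) (simp add: algebra_simps)
  then have lower: "m \<le> f x" if "x \<in> space M" for x
    unfolding m_def using that by (rule cINF_lower)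
  have upper: "f x - c \<le> m" if "x \<in> space M" for x
    unfolding m_def
  proof (rule cINF_greatest)
    show "f x - c \<le> f y" if "y \<in> space M" for y
      using osc[OF \<open>x \<in> space M\<close> that] by linarith
  qed (use x0 in blast)
  have "f x \<in> {m..m + c}" if "x \<in> space M" for x
    using lower[OF that] upper[OF that] by simp
  then interpret interval_bounded_random_variable M f m "m + c"
    by unfold_locales (auto intro: AE_I2)
  show ?thesis
    using Hoeffdings_lemma_nn_integral[OF \<open>l > 0\<close>] by (simp only: add_diff_cancel_left')
qed

lemma fun_upd_in_space_PiM:
  "x \<in> space (PiM J N) \<Longrightarrow> y \<in> space (N i) \<Longrightarrow> x(i := y) \<in> space (PiM (insert i J) N)"
  by (simp add: space_PiM PiE_fun_upd)

lemma borel_measurable_section: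
  "f \<in> borel_measurable (PiM (insert i J) N) \<Longrightarrow> x \<in> space (PiM J N) \<Longrightarrow> i \<notin> J \<Longrightarrow>
    (\<lambda>y. f (x(i := y))) \<in> borel_measurable (N i)"
  using measurable_comp[OF measurable_component_update] by (simp add: comp_def)

lemma bounded_differences_section_integrable:
  assumes N: "\<And>i. prob_space (N i)" and "finite J"
    and f_meas: "f \<in> borel_measurable (PiM (insert i J) N)"
    and bdd: "bounded_differences (insert i J) N f c"
    and x: "x \<in> space (PiM J N)" and "i \<notin> J"
  shows "integrable (N i) (\<lambda>y. f (x(i := y)))"
proof -
  interpret prob_space "N i"
    by (rule N)
  obtain B where "\<And>x. x \<in> space (PiM (insert i J) N) \<Longrightarrow> \<bar>f x\<bar> \<le> B"
    using bounded_differences_bounded[OF _ N bdd] \<open>finite J\<close> by blast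
  with x show ?thesis
    by (intro integrable_const_bound[where B = B] AE_I2
        borel_measurable_section[OF f_meas x \<open>i \<notin> J\<close>]) (simp add: fun_upd_in_space_PiM)
qed

lemma bounded_differences_section_integral:
  fixes N :: "'i \<Rightarrow> 'a measure" and f :: "('i \<Rightarrow> 'a) \<Rightarrow> real"
  assumes N: "\<And>i. prob_space (N i)" and J: "finite J" "i \<notin> J"
    and f_meas: "f \<in> borel_measurable (PiM (insert i J) N)"
    and bdd: "bounded_differences (insert i J) N f c"
  shows "(\<lambda>x. \<integral>y. f (x(i := y)) \<partial>N i) \<in> borel_measurable (PiM J N)"
    and "bounded_differences J N (\<lambda>x. \<integral>y. f (x(i := y)) \<partial>N i) c"
proof -
  interpret Ni: prob_space "N i"
    by (rule N)
  note section_integrable = bounded_differences_section_integrable[OF N J(1) f_meas bdd _ J(2)]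
  have "(\<lambda>(x, y). f (x(i := y))) \<in> borel_measurable (PiM J N \<Otimes>\<^sub>M N i)"
    using measurable_comp[OF measurable_add_dim f_meas] by (simp add: comp_def split_beta')
  then show "(\<lambda>x. \<integral>y. f (x(i := y)) \<partial>N i) \<in> borel_measurable (PiM J N)"
    by (rule Ni.borel_measurable_lebesgue_integral)
  show "bounded_differences J N (\<lambda>x. \<integral>y. f (x(i := y)) \<partial>N i) c"
    unfolding bounded_differences_def
  proof (intro ballI)
    fix x j z
    assume x: "x \<in> space (PiM J N)" and j: "j \<in> J" and z: "z \<in> space (N j)"
    have x': "x(j := z) \<in> space (PiM J N)"
      using fun_upd_in_space_PiM[OF x z] j by (simp add: insert_absorb)
    have "\<bar>f (x(i := y)) - f ((x(j := z))(i := y))\<bar> \<le> c" if "y \<in> space (N i)" for y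
    proof -
      have "(x(j := z))(i := y) = (x(i := y))(j := z)"
        using J(2) j by (auto simp: fun_eq_iff)
      then show ?thesis
        using bounded_differencesD[OF bdd fun_upd_in_space_PiM[OF x that], of j z] j z by simp
    qed
    then have "(\<integral>y. \<bar>f (x(i := y)) - f ((x(j := z))(i := y))\<bar> \<partial>N i) \<le> c"
      using section_integrable[OF x] section_integrable[OF x']
      by (intro Ni.integral_le_const AE_I2) auto
    moreover have "\<bar>\<integral>y. f (x(i := y)) - f ((x(j := z))(i := y)) \<partial>N i\<bar>
        \<le> (\<integral>y. \<bar>f (x(i := y)) - f ((x(j := z))(i := y))\<bar> \<partial>N i)"
      using integral_norm_bound[of "N i" "\<lambda>y. f (x(i := y)) - f ((x(j := z))(i := y))"] by simp
    ultimately show "\<bar>(\<integral>y. f (x(i := y)) \<partial>N i) - (\<integral>y. f ((x(j := z))(i := y)) \<partial>N i)\<bar> \<le> c"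
      using section_integrable[OF x] section_integrable[OF x'] by simp
  qed
qed

lemma bounded_differences_section_mgf_bound:
  assumes N: "\<And>i. prob_space (N i)" and "i \<notin> J"
    and f_meas: "f \<in> borel_measurable (PiM (insert i J) N)"
    and bdd: "bounded_differences (insert i J) N f c"
    and x: "x \<in> space (PiM J N)" and "l > 0"
  shows "(\<integral>\<^sup>+y. ennreal (exp (l * (f (x(i := y)) - (\<integral>y. f (x(i := y)) \<partial>N i)))) \<partial>N i)
           \<le> ennreal (exp (l\<^sup>2 * c\<^sup>2 / 8))"
proof (rule prob_space.Hoeffdings_lemma_oscillation[OF N borel_measurable_section[OF f_meas x \<open>i \<notin> J\<close>]])
  fix y y' assume "y \<in> space (N i)" "y' \<in> space (N i)"
  then have "\<bar>f (x(i := y)) - f ((x(i := y))(i := y'))\<bar> \<le> c"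
    using bounded_differencesD[OF bdd fun_upd_in_space_PiM[OF x]] by blast
  then show "f (x(i := y)) - f (x(i := y')) \<le> c"
    by simp
qed fact

lemma mcdiarmid_mgf_bound:
  fixes N :: "'i \<Rightarrow> 'a measure" and f :: "('i \<Rightarrow> 'a) \<Rightarrow> real"
  assumes N: "\<And>i. prob_space (N i)" and "finite I"
    and "f \<in> borel_measurable (PiM I N)" "bounded_differences I N f c" and l: "l > 0"
  shows "(\<integral>\<^sup>+x. ennreal (exp (l * (f x - (\<integral>x. f x \<partial>PiM I N)))) \<partial>PiM I N)
           \<le> ennreal (exp (l\<^sup>2 * c\<^sup>2 * card I / 8))"
  using assms(2-4)
proof (induction I arbitrary: f rule: finite_induct)
  case empty
  then show ?case
    by (simp add: PiM_empty nn_integral_count_space_finite lebesgue_integral_count_space_finite)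
next
  case (insert i J f)
  interpret product_sigma_finite N
    using N by (intro product_sigma_finite.intro) (simp add: prob_space_imp_sigma_finite)
  define h where "h x = (\<integral>y. f (x(i := y)) \<partial>N i)" for x
  define \<mu> where "\<mu> = (\<integral>x. h x \<partial>PiM J N)"
  note h = bounded_differences_section_integral[OF N insert(1,2) insert.prems, folded h_def]
  have "integrable (PiM (insert i J) N) f"
    using insert(1) by (intro bounded_differences_integrable[OF _ N insert.prems]) simp
  then have "(\<integral>x. f x \<partial>PiM (insert i J) N) = \<mu>"
    unfolding \<mu>_def h_def by (rule product_integral_insert[OF insert(1,2)])
  then have "(\<integral>\<^sup>+x. ennreal (exp (l * (f x - (\<integral>x. f x \<partial>PiM (insert i J) N)))) \<partial>PiM (insert i J) N)
      = (\<integral>\<^sup>+x. (\<integral>\<^sup>+y. ennreal (exp (l * (f (x(i := y)) - \<mu>))) \<partial>N i) \<partial>PiM J N)"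
    using insert.prems(1) by (simp add: product_nn_integral_insert[OF insert(1,2)])
  also have "\<dots> = (\<integral>\<^sup>+x. ennreal (exp (l * (h x - \<mu>))) *
        (\<integral>\<^sup>+y. ennreal (exp (l * (f (x(i := y)) - h x))) \<partial>N i) \<partial>PiM J N)"
  proof (intro nn_integral_cong)
    fix x assume x: "x \<in> space (PiM J N)"
    have "exp (l * (f (x(i := y)) - \<mu>)) = exp (l * (h x - \<mu>)) * exp (l * (f (x(i := y)) - h x))" for y
      unfolding mult_exp_exp by (simp add: algebra_simps)
    then have split: "ennreal (exp (l * (f (x(i := y)) - \<mu>)))
        = ennreal (exp (l * (h x - \<mu>))) * ennreal (exp (l * (f (x(i := y)) - h x)))" for y
      by (simp add: ennreal_mult)
    have "(\<lambda>y. ennreal (exp (l * (f (x(i := y)) - h x)))) \<in> borel_measurable (N i)"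
      by (rule measurable_compose[OF borel_measurable_section[OF insert.prems(1) x insert(2)]]) simp
    then show "(\<integral>\<^sup>+y. ennreal (exp (l * (f (x(i := y)) - \<mu>))) \<partial>N i)
        = ennreal (exp (l * (h x - \<mu>))) * (\<integral>\<^sup>+y. ennreal (exp (l * (f (x(i := y)) - h x))) \<partial>N i)"
      unfolding split by (rule nn_integral_cmult)
  qed
  also have "\<dots> \<le> (\<integral>\<^sup>+x. ennreal (exp (l * (h x - \<mu>))) * ennreal (exp (l\<^sup>2 * c\<^sup>2 / 8)) \<partial>PiM J N)"
    unfolding h_def
    by (intro nn_integral_mono mult_left_mono bounded_differences_section_mgf_bound[OF N insert(2)
          insert.prems _ l]) simp_all
  also have "\<dots> = (\<integral>\<^sup>+x. ennreal (exp (l * (h x - \<mu>))) \<partial>PiM J N) * ennreal (exp (l\<^sup>2 * c\<^sup>2 / 8))"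
    using h(1) by (simp add: nn_integral_multc)
  also have "\<dots> \<le> ennreal (exp (l\<^sup>2 * c\<^sup>2 * card J / 8)) * ennreal (exp (l\<^sup>2 * c\<^sup>2 / 8))"
    unfolding \<mu>_def by (intro mult_right_mono insert.IH h) simp
  also have "\<dots> = ennreal (exp (l\<^sup>2 * c\<^sup>2 * card (insert i J) / 8))"
    using insert(1,2) by (simp add: ennreal_mult'[symmetric] mult_exp_exp add_divide_distrib algebra_simps)
  finally show ?case .
qed

section \<open>Hoelder's inequality and change of measure\<close>

lemma le_two_sqrt_if_le_inverse_plus_linear:
  fixes d A b :: real
  assumes "A \<ge> 0" "b > 0" and le: "\<And>l. l > 0 \<Longrightarrow> d \<le> A / l + b * l"
  shows "d \<le> 2 * sqrt (A * b)"
proof (cases "A = 0")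
  case True
  show ?thesis
  proof (rule ccontr)
    assume "\<not> ?thesis"
    with True have "d > 0"
      by simp
    with le[of "d / (2 * b)"] True \<open>b > 0\<close> show False
      by simp
  qed
next
  case False
  define u v where "u = sqrt A" and "v = sqrt b"
  have uv: "u > 0" "v > 0" "A = u * u" "b = v * v" "sqrt (A * b) = u * v"
    using False assms by (auto simp: u_def v_def real_sqrt_mult)
  have "d \<le> A / (u / v) + b * (u / v)"
    using uv by (intro le) auto
  also have "\<dots> = 2 * sqrt (A * b)"
    using uv by (simp add: field_simps)
  finally show ?thesis .
qed

definition Holder_conjugate :: "real \<Rightarrow> real" where
  "Holder_conjugate p = p / (p - 1)"

lemma Holder_conjugate_gt_1: "p > 1 \<Longrightarrow> Holder_conjugate p > 1"
  by (simp add: Holder_conjugate_def)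

lemma Holder_conjugate_inverse_add: "p > 1 \<Longrightarrow> 1 / p + 1 / Holder_conjugate p = 1"
  by (simp add: Holder_conjugate_def field_simps)

lemma Holder_inequality:
  fixes g e :: "'b \<Rightarrow> real"
  assumes pq: "p > 1" "q > 1" "1 / p + 1 / q = 1"
    and nonneg: "\<And>x. x \<in> space M \<Longrightarrow> 0 \<le> g x" "\<And>x. x \<in> space M \<Longrightarrow> 0 \<le> e x"
    and int: "integrable M (\<lambda>x. g x powr p)" "integrable M (\<lambda>x. e x powr q)"
      "integrable M (\<lambda>x. g x * e x)"
    and pos: "(\<integral>x. g x powr p \<partial>M) > 0" "(\<integral>x. e x powr q \<partial>M) > 0"
  shows "(\<integral>x. g x * e x \<partial>M) \<le> (\<integral>x. g x powr p \<partial>M) powr (1 / p) * (\<integral>x. e x powr q \<partial>M) powr (1 / q)"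
proof -
  define G where "G = (\<integral>x. g x powr p \<partial>M)"
  define E where "E = (\<integral>x. e x powr q \<partial>M)"
  define A where "A = G powr (1 / p)"
  define B where "B = E powr (1 / q)"
  have A: "A > 0" "A powr p = G" and B: "B > 0" "B powr q = E"
    using pos pq by (auto simp: A_def B_def G_def E_def powr_powr)
  have young: "g x * e x / (A * B) \<le> g x powr p / (p * G) + e x powr q / (q * E)"
    if "x \<in> space M" for x
  proof -
    have "(g x / A) * (e x / B) \<le> (g x / A) powr p / p + (e x / B) powr q / q"
      using pq nonneg[OF that] A B by (intro Youngs_inequality) auto
    then show ?thesis
      using A B nonneg[OF that] by (simp add: powr_divide mult.commute)
  qed
  have "(\<integral>x. g x * e x \<partial>M) / (A * B) = (\<integral>x. g x * e x / (A * B) \<partial>M)"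
    by simp
  also have "\<dots> \<le> (\<integral>x. g x powr p / (p * G) + e x powr q / (q * E) \<partial>M)"
    using int young by (intro integral_mono) auto
  also have "\<dots> = 1"
    using int pos pq by (simp add: G_def E_def)
  finally show ?thesis
    using A B by (simp add: A_def B_def G_def E_def divide_le_eq)
qed

lemma (in prob_space) integrable_exp_bounded:
  fixes D :: "'a \<Rightarrow> real"
  assumes "D \<in> borel_measurable M" "\<And>x. x \<in> space M \<Longrightarrow> D x \<le> C"
  shows "integrable M (\<lambda>x. exp (D x))"
  using assms by (intro integrable_const_bound[where B = "exp C"]) auto

locale renyi_change_of_measure = Q: prob_space Q + P: prob_space P for Q P :: "'b measure" +
  fixes \<alpha> :: real
  assumes sets_eq: "sets P = sets Q" and ac: "absolutely_continuous Q P"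
    and gt_1: "\<alpha> > 1" and renyi_finite: "renyi_H \<alpha> P Q < \<infinity>"
begin

abbreviation \<rho> :: "'b \<Rightarrow> real" where
  "\<rho> x \<equiv> enn2real (RN_deriv Q P x)"

abbreviation H\<^sub>\<alpha> :: real where
  "H\<^sub>\<alpha> \<equiv> enn2real (renyi_H \<alpha> P Q)"

abbreviation \<alpha>' :: real where
  "\<alpha>' \<equiv> Holder_conjugate \<alpha>"

lemmas conjugate_exponent = Holder_conjugate_gt_1[OF gt_1] Holder_conjugate_inverse_add[OF gt_1]

lemma space_eq: "space P = space Q"
  using sets_eq by (rule sets_eq_imp_space_eq)

lemma borel_measurable_P: "\<phi> \<in> borel_measurable Q \<Longrightarrow> \<phi> \<in> borel_measurable P"
  by (simp add: measurable_cong_sets[OF sets_eq refl])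

lemma density_eq: "P = density Q (\<lambda>x. ennreal (\<rho> x))"
proof -
  have "AE x in Q. RN_deriv Q P x = ennreal (\<rho> x)"
    using Q.sigma_finite_measure_axioms P.sigma_finite_measure_axioms ac sets_eq
    by (auto intro: AE_mp[OF sigma_finite_measure.RN_deriv_finite] simp: less_top)
  then have "density Q (RN_deriv Q P) = density Q (\<lambda>x. ennreal (\<rho> x))"
    by (intro density_cong) auto
  with Q.density_RN_deriv[OF ac sets_eq] show ?thesis
    by simp
qed

lemma integral_P: "\<phi> \<in> borel_measurable Q \<Longrightarrow> (\<integral>x. \<phi> x \<partial>P) = (\<integral>x. \<rho> x * \<phi> x \<partial>Q)"
  by (subst density_eq, subst integral_density) auto

lemma integrable_\<rho>: "integrable Q \<rho>" and integral_\<rho>: "(\<integral>x. \<rho> x \<partial>Q) = 1"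
proof -
  have "(\<integral>\<^sup>+x. ennreal (\<rho> x) \<partial>Q) = emeasure P (space P)"
    by (subst (2) density_eq) (auto simp: emeasure_density space_eq intro!: nn_integral_cong)
  then show "integrable Q \<rho>" "(\<integral>x. \<rho> x \<partial>Q) = 1"
    using nn_integral_eq_integrable[of \<rho> Q 1] P.emeasure_space_1 by auto
qed

lemma integrable_\<rho>_powr: "integrable Q (\<lambda>x. \<rho> x powr \<alpha>)"
  and integral_\<rho>_powr: "(\<integral>x. \<rho> x powr \<alpha> \<partial>Q) = H\<^sub>\<alpha>"
proof -
  have "(\<integral>\<^sup>+x. ennreal (\<rho> x powr \<alpha>) \<partial>Q) = ennreal H\<^sub>\<alpha>"
    using renyi_finite by (simp add: renyi_H_def less_top)
  then show "integrable Q (\<lambda>x. \<rho> x powr \<alpha>)" "(\<integral>x. \<rho> x powr \<alpha> \<partial>Q) = H\<^sub>\<alpha>"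
    using nn_integral_eq_integrable[of "\<lambda>x. \<rho> x powr \<alpha>" Q H\<^sub>\<alpha>] by auto
qed

lemma renyi_ge_1: "1 \<le> H\<^sub>\<alpha>"
proof -
  have "(\<integral>x. \<rho> x \<partial>Q) \<le> (\<integral>x. \<rho> x powr \<alpha> / \<alpha> + 1 / \<alpha>' \<partial>Q)"
  proof (rule integral_mono)
    show "\<rho> x \<le> \<rho> x powr \<alpha> / \<alpha> + 1 / \<alpha>'" for x
      using Youngs_inequality[of \<alpha> \<alpha>' "\<rho> x" 1] gt_1 conjugate_exponent by simp
  qed (use integrable_\<rho> integrable_\<rho>_powr in auto)
  then have "1 \<le> H\<^sub>\<alpha> / \<alpha> + 1 / \<alpha>'"
    by (simp add: integral_\<rho> integral_\<rho>_powr integrable_\<rho>_powr Q.prob_space)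
  with conjugate_exponent(2) gt_1 show ?thesis
    by (simp add: field_simps)
qed

lemma integral_exp_P_le_Holder:
  assumes D_meas: "D \<in> borel_measurable Q" and D_le: "\<And>x. x \<in> space Q \<Longrightarrow> D x \<le> C"
  shows "(\<integral>x. exp (D x) \<partial>P) \<le> H\<^sub>\<alpha> powr (1 / \<alpha>) * (\<integral>x. exp (\<alpha>' * D x) \<partial>Q) powr (1 / \<alpha>')"
proof -
  have exp_powr: "exp (D x) powr \<alpha>' = exp (\<alpha>' * D x)" for x
    by (simp add: powr_def)
  have int_exp: "integrable Q (\<lambda>x. exp (\<alpha>' * D x))"
    using D_meas D_le conjugate_exponent(1)
    by (intro Q.integrable_exp_bounded[where C = "\<alpha>' * C"] mult_left_mono) auto
  have int_prod: "integrable Q (\<lambda>x. \<rho> x * exp (D x))"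
  proof (rule Bochner_Integration.integrable_bound)
    show "integrable Q (\<lambda>x. exp C * \<rho> x)"
      using integrable_\<rho> by simp
    show "AE x in Q. norm (\<rho> x * exp (D x)) \<le> norm (exp C * \<rho> x)"
    proof (rule AE_I2)
      fix x assume "x \<in> space Q"
      then have "\<rho> x * exp (D x) \<le> \<rho> x * exp C"
        using D_le by (intro mult_left_mono) auto
      then show "norm (\<rho> x * exp (D x)) \<le> norm (exp C * \<rho> x)"
        by (simp add: abs_mult mult.commute)
    qed
  qed (use D_meas in simp)
  have "0 < (\<integral>x. exp (\<alpha>' * D x) \<partial>Q)"
    using int_exp by (intro Q.expectation_greater AE_I2) auto
  then have "(\<integral>x. \<rho> x * exp (D x) \<partial>Q)
      \<le> (\<integral>x. \<rho> x powr \<alpha> \<partial>Q) powr (1 / \<alpha>) * (\<integral>x. exp (D x) powr \<alpha>' \<partial>Q) powr (1 / \<alpha>')"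
    using gt_1 conjugate_exponent integrable_\<rho>_powr int_exp int_prod renyi_ge_1
    by (intro Holder_inequality) (simp_all add: exp_powr integral_\<rho>_powr)
  then show ?thesis
    using D_meas by (simp add: integral_P integral_\<rho>_powr exp_powr)
qed

lemma integral_le_renyi_log_exp_integral:
  assumes D_meas: "D \<in> borel_measurable Q" and D_le: "\<And>x. x \<in> space Q \<Longrightarrow> D x \<le> C"
    and D_int: "integrable P D"
  shows "(\<integral>x. D x \<partial>P) \<le> ln H\<^sub>\<alpha> / \<alpha> + ln (\<integral>x. exp (\<alpha>' * D x) \<partial>Q) / \<alpha>'"
proof -
  have "integrable Q (\<lambda>x. exp (\<alpha>' * D x))"
    using D_meas D_le conjugate_exponent(1)
    by (intro Q.integrable_exp_bounded[where C = "\<alpha>' * C"] mult_left_mono) auto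
  then have pos: "0 < (\<integral>x. exp (\<alpha>' * D x) \<partial>Q)"
    by (intro Q.expectation_greater AE_I2) auto
  have "integrable P (\<lambda>x. exp (D x))"
    using D_meas D_le space_eq by (intro P.integrable_exp_bounded borel_measurable_P) auto
  then have "exp (\<integral>x. D x \<partial>P) \<le> (\<integral>x. exp (D x) \<partial>P)"
    using P.jensens_inequality[of D UNIV _ _ exp] D_int exp_convex by simp
  also have "\<dots> \<le> H\<^sub>\<alpha> powr (1 / \<alpha>) * (\<integral>x. exp (\<alpha>' * D x) \<partial>Q) powr (1 / \<alpha>')"
    using D_meas D_le by (rule integral_exp_P_le_Holder)
  also have "\<dots> = exp (ln H\<^sub>\<alpha> / \<alpha> + ln (\<integral>x. exp (\<alpha>' * D x) \<partial>Q) / \<alpha>')"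
    using renyi_ge_1 pos by (simp add: powr_def exp_add)
  finally show ?thesis
    by simp
qed

lemma integral_diff_le_mgf:
  assumes f_meas: "f \<in> borel_measurable Q" and f_bdd: "\<And>x. x \<in> space Q \<Longrightarrow> \<bar>f x\<bar> \<le> B"
    and "s > 0"
    and mgf: "\<And>l. l > 0 \<Longrightarrow>
      (\<integral>\<^sup>+x. ennreal (exp (l * (f x - (\<integral>x. f x \<partial>Q)))) \<partial>Q) \<le> ennreal (exp (l\<^sup>2 * s))"
  shows "(\<integral>x. f x \<partial>P) - (\<integral>x. f x \<partial>Q) \<le> 2 * sqrt (ln H\<^sub>\<alpha> / \<alpha> * (\<alpha>' * s))"
proof -
  have f_int: "integrable P f"
    using f_meas f_bdd space_eq by (intro P.integrable_const_bound[where B = B] borel_measurable_P) auto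
  have "(\<integral>x. f x \<partial>P) - (\<integral>x. f x \<partial>Q) \<le> (ln H\<^sub>\<alpha> / \<alpha>) / l + (\<alpha>' * s) * l" if l: "l > 0" for l
  proof -
    define D where "D x = l * (f x - (\<integral>x. f x \<partial>Q))" for x
    have D_meas: "D \<in> borel_measurable Q"
      using f_meas by (simp add: D_def[abs_def])
    have D_le: "D x \<le> l * (B + \<bar>\<integral>x. f x \<partial>Q\<bar>)" if "x \<in> space Q" for x
      using f_bdd[OF that] l unfolding D_def by (intro mult_left_mono) auto
    have "\<alpha>' * l > 0"
      using conjugate_exponent(1) l by (intro mult_pos_pos) auto
    from mgf[OF this] have "(\<integral>\<^sup>+x. ennreal (exp (\<alpha>' * D x)) \<partial>Q) \<le> ennreal (exp ((\<alpha>' * l)\<^sup>2 * s))"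
      by (simp add: D_def mult.assoc)
    moreover have "integrable Q (\<lambda>x. exp (\<alpha>' * D x))"
      using D_meas D_le conjugate_exponent(1)
      by (intro Q.integrable_exp_bounded[where C = "\<alpha>' * (l * (B + \<bar>\<integral>x. f x \<partial>Q\<bar>))"] mult_left_mono) auto
    ultimately have "(\<integral>x. exp (\<alpha>' * D x) \<partial>Q) \<le> exp ((\<alpha>' * l)\<^sup>2 * s)"
      by (simp add: nn_integral_eq_integral ennreal_le_iff)
    moreover have "0 < (\<integral>x. exp (\<alpha>' * D x) \<partial>Q)"
      using \<open>integrable Q (\<lambda>x. exp (\<alpha>' * D x))\<close> by (intro Q.expectation_greater AE_I2) auto
    ultimately have "ln (\<integral>x. exp (\<alpha>' * D x) \<partial>Q) \<le> (\<alpha>' * l)\<^sup>2 * s"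
      using ln_le_cancel_iff[of "\<integral>x. exp (\<alpha>' * D x) \<partial>Q" "exp ((\<alpha>' * l)\<^sup>2 * s)"] by simp
    then have "ln (\<integral>x. exp (\<alpha>' * D x) \<partial>Q) / \<alpha>' \<le> (\<alpha>' * s) * l\<^sup>2"
      using conjugate_exponent(1) by (simp add: divide_le_eq power2_eq_square mult_ac)
    moreover have "(\<integral>x. D x \<partial>P) = l * ((\<integral>x. f x \<partial>P) - (\<integral>x. f x \<partial>Q))"
      using f_int by (simp add: D_def[abs_def] P.prob_space right_diff_distrib)
    moreover have "(\<integral>x. D x \<partial>P) \<le> ln H\<^sub>\<alpha> / \<alpha> + ln (\<integral>x. exp (\<alpha>' * D x) \<partial>Q) / \<alpha>'"
      using D_meas D_le f_int
      by (intro integral_le_renyi_log_exp_integral) (auto simp: D_def[abs_def])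
    ultimately have "l * ((\<integral>x. f x \<partial>P) - (\<integral>x. f x \<partial>Q)) \<le> ln H\<^sub>\<alpha> / \<alpha> + (\<alpha>' * s) * l\<^sup>2"
      by linarith
    then have "(\<integral>x. f x \<partial>P) - (\<integral>x. f x \<partial>Q) \<le> (ln H\<^sub>\<alpha> / \<alpha> + (\<alpha>' * s) * l\<^sup>2) / l"
      using l by (simp only: pos_le_divide_eq mult.commute)
    also have "\<dots> = (ln H\<^sub>\<alpha> / \<alpha>) / l + (\<alpha>' * s) * l"
      using l by (simp add: power2_eq_square add_divide_distrib)
    finally show ?thesis .
  qed
  then show ?thesis
    using renyi_ge_1 gt_1 conjugate_exponent \<open>s > 0\<close>
    by (intro le_two_sqrt_if_le_inverse_plus_linear) auto
qed

end

lemma abs_integral_diff_le_bounded_differences: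
  fixes N :: "'i \<Rightarrow> 'a measure" and f :: "('i \<Rightarrow> 'a) \<Rightarrow> real"
  assumes N: "\<And>i. prob_space (N i)" and I: "finite I" "I \<noteq> {}"
    and "renyi_change_of_measure (PiM I N) P \<alpha>"
    and f_meas: "f \<in> borel_measurable (PiM I N)" and bdd: "bounded_differences I N f c" and "c > 0"
  shows "\<bar>(\<integral>x. f x \<partial>P) - (\<integral>x. f x \<partial>PiM I N)\<bar>
           \<le> sqrt (Holder_conjugate \<alpha> * ln (enn2real (renyi_H \<alpha> P (PiM I N))) * c\<^sup>2 * card I / (2 * \<alpha>))"
proof -
  interpret renyi_change_of_measure "PiM I N" P \<alpha>
    by fact
  define s where "s = c\<^sup>2 * card I / 8"
  have "s > 0"
    using I \<open>c > 0\<close> by (simp add: s_def card_gt_0_iff)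
  obtain B where B: "\<And>x. x \<in> space (PiM I N) \<Longrightarrow> \<bar>f x\<bar> \<le> B"
    using bounded_differences_bounded[OF I(1) N bdd] by blast
  have mgf: "(\<integral>\<^sup>+x. ennreal (exp (l * (g x - (\<integral>x. g x \<partial>PiM I N)))) \<partial>PiM I N) \<le> ennreal (exp (l\<^sup>2 * s))"
    if "g \<in> borel_measurable (PiM I N)" "bounded_differences I N g c" "l > 0" for g l
    using mcdiarmid_mgf_bound[OF N I(1) that] by (simp add: s_def mult.assoc)
  have "(\<integral>x. f x \<partial>P) - (\<integral>x. f x \<partial>PiM I N) \<le> 2 * sqrt (ln H\<^sub>\<alpha> / \<alpha> * (\<alpha>' * s))"
    using f_meas bdd by (intro integral_diff_le_mgf[OF f_meas B \<open>s > 0\<close>] mgf)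
  moreover have "(\<integral>x. - f x \<partial>P) - (\<integral>x. - f x \<partial>PiM I N) \<le> 2 * sqrt (ln H\<^sub>\<alpha> / \<alpha> * (\<alpha>' * s))"
    using f_meas bdd B by (intro integral_diff_le_mgf[OF _ _ \<open>s > 0\<close>] mgf) auto
  moreover have "2 * sqrt x = sqrt (4 * x)" for x :: real
    by (simp add: real_sqrt_mult)
  moreover have "4 * (ln H\<^sub>\<alpha> / \<alpha> * (\<alpha>' * s)) = \<alpha>' * ln H\<^sub>\<alpha> * c\<^sup>2 * card I / (2 * \<alpha>)"
    by (simp add: s_def)
  ultimately show ?thesis
    by (simp add: abs_le_iff)
qed

theorem lemma2:
  fixes \<Omega> :: "'w measure" and M :: "nat \<Rightarrow> 'a measure"
    and X :: "nat \<Rightarrow> 'w \<Rightarrow> 'a" and n :: nat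
    and f :: "(nat \<Rightarrow> 'a) \<Rightarrow> real" and \<alpha> :: real
  assumes "prob_space \<Omega>"
    and "n \<ge> 1"
    and X_meas: "\<And>i. i < n \<Longrightarrow> X i \<in> measurable \<Omega> (M i)"
    and ac: "absolutely_continuous
              (PiM {..<n} (\<lambda>i. distr \<Omega> (M i) (X i)))
              (distr \<Omega> (PiM {..<n} M) (\<lambda>\<omega>. \<lambda>i\<in>{..<n}. X i \<omega>))"
    and f_meas: "f \<in> borel_measurable (PiM {..<n} M)"
    and bdd: "\<And>x i xh. x \<in> space (PiM {..<n} M) \<Longrightarrow> i < n \<Longrightarrow> xh \<in> space (M i) \<Longrightarrow>
               \<bar>f x - f (x(i := xh))\<bar> \<le> 1 / real n"
    and "\<alpha> > 1"
    and H_fin: "renyi_H \<alpha> (distr \<Omega> (PiM {..<n} M) (\<lambda>\<omega>. \<lambda>i\<in>{..<n}. X i \<omega>))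
                   (PiM {..<n} (\<lambda>i. distr \<Omega> (M i) (X i))) < \<infinity>"
  shows "let P = distr \<Omega> (PiM {..<n} M) (\<lambda>\<omega>. \<lambda>i\<in>{..<n}. X i \<omega>);
             Q = PiM {..<n} (\<lambda>i. distr \<Omega> (M i) (X i));
             \<beta> = \<alpha> / (\<alpha> - 1);
             H = enn2real (renyi_H \<alpha> P Q);
             t = sqrt (\<beta> * ln H / (2 * \<alpha> * real n))
         in \<bar>(\<integral>x. f x \<partial>P) - (\<integral>x. f x \<partial>Q)\<bar>
              \<le> t + sqrt \<beta> / (2 powr (1 / \<alpha>) * sqrt (2 * real n / \<alpha> * ln H))"
proof -
  interpret \<Omega>: prob_space \<Omega>
    by fact
  \<comment> \<open>The product measure lemmas need a probability space in every coordinate, not only below n.\<close>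
  define N where "N i = (if i < n then distr \<Omega> (M i) (X i) else return (count_space UNIV) undefined)" for i
  have N: "prob_space (N i)" for i
    by (cases "i < n") (auto simp: N_def intro!: \<Omega>.prob_space_distr X_meas prob_space_return)
  have Q_eq: "PiM {..<n} (\<lambda>i. distr \<Omega> (M i) (X i)) = PiM {..<n} N"
    by (rule PiM_cong) (auto simp: N_def)
  have sets_eq: "sets (PiM {..<n} N) = sets (PiM {..<n} M)"
    by (rule sets_PiM_cong) (auto simp: N_def)
  define P where "P = distr \<Omega> (PiM {..<n} M) (\<lambda>\<omega>. \<lambda>i\<in>{..<n}. X i \<omega>)"
  define H where "H = enn2real (renyi_H \<alpha> P (PiM {..<n} N))"
  have "prob_space P"
    unfolding P_def by (intro \<Omega>.prob_space_distr measurable_restrict X_meas) simp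
  then have change: "renyi_change_of_measure (PiM {..<n} N) P \<alpha>"
    using ac H_fin \<open>\<alpha> > 1\<close> sets_eq
    by (intro renyi_change_of_measure.intro renyi_change_of_measure_axioms.intro prob_space_PiM N)
      (simp_all add: P_def Q_eq)
  have "bounded_differences {..<n} N f (1 / n)"
    using bdd sets_eq_imp_space_eq[OF sets_eq] by (auto simp: bounded_differences_def N_def)
  then have "\<bar>(\<integral>x. f x \<partial>P) - (\<integral>x. f x \<partial>PiM {..<n} N)\<bar>
      \<le> sqrt (Holder_conjugate \<alpha> * ln H * (1 / n)\<^sup>2 * card {..<n} / (2 * \<alpha>))"
    using \<open>n \<ge> 1\<close> f_meas unfolding H_def
    by (intro abs_integral_diff_le_bounded_differences[OF N finite_lessThan _ change])
      (auto simp: measurable_cong_sets[OF sets_eq refl] lessThan_empty_iff)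
  also have "\<dots> = sqrt (\<alpha> / (\<alpha> - 1) * ln H / (2 * \<alpha> * n))"
    using \<open>n \<ge> 1\<close> by (simp add: Holder_conjugate_def power2_eq_square)
  finally have "\<bar>(\<integral>x. f x \<partial>P) - (\<integral>x. f x \<partial>PiM {..<n} N)\<bar> \<le> sqrt (\<alpha> / (\<alpha> - 1) * ln H / (2 * \<alpha> * n))" .
  moreover have "0 \<le> sqrt (\<alpha> / (\<alpha> - 1)) / (2 powr (1 / \<alpha>) * sqrt (2 * real n / \<alpha> * ln H))"
    using \<open>\<alpha> > 1\<close> renyi_change_of_measure.renyi_ge_1[OF change] unfolding H_def
    by (intro divide_nonneg_nonneg mult_nonneg_nonneg) auto
  ultimately show ?thesis
    unfolding Let_def Q_eq P_def[symmetric] H_def[symmetric] by linarith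
qed

end
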